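(* Let $P:\mathbb{Z}\to\mathbb{RP}^2$ be a $3$-nice sequence with every three consecutive points non-collinear, let $i\in\mathbb{Z}$, and let $x_{2i},x_{2i+1}$ be the corner invariants at index $i$. Suppose $P_{i-2},P_{i-1},P_i,P_{i+1}\in\mathbb{A}^2$, the triples $(P_{i-2},P_{i-1},P_i)$ and $(P_{i-1},P_i,P_{i+1})$ are positive, the quadrilateral with vertices $P_{i-2},P_{i-1},P_i,P_{i+1}$ (in this order) is convex, and $(x_{2i},x_{2i+1})\in(1,\infty)\times(0,1)$. Then $P_{i+2}\in\operatorname{int}(P_{i-2},P_{i-1},P_{i+1})$; moreover the quadrilateral with vertices $P_{i-1},P_i,P_{i+1},P_{i+2}$ is convex and the triples $(P_i,P_{i+1},P_{i+2})$ and $(P_{i-1},P_i,P_{i+2})$ are positive.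
   Context: The affine patch $\mathbb{A}^2=\{[x:y:1]\}\subset\mathbb{RP}^2$ is identified with $\mathbb{R}^2$. For $V_1,V_2,V_3\in\mathbb{A}^2$ with affine coordinates $\tilde V_j=(x_j,y_j,1)$, $\mathcal{O}(V_1,V_2,V_3)=\det(\tilde V_1,\tilde V_2,\tilde V_3)$; the triple is positive if $\mathcal{O}>0$. $\operatorname{int}(V_1,V_2,V_3)$ is the interior of the affine triangle. $P$ is $3$-nice if $P_j,P_{j+1},P_{j+3},P_{j+4}$ are in general position for every $j$. Inverse cross ratio: for four collinear points $A,B,C,D$, map their line projectively to the $x$-axis with coordinates $a,b,c,d$ and set $\chi(A,B,C,D)=\frac{(a-b)(c-d)}{(a-c)(b-d)}$ (value in $\mathbb{R}\cup\{\infty\}$, projectively invariant). Corner invariants: $x_{2i}=\chi(P_{i-2},P_{i-1},P_{i-2}P_{i-1}\cap P_iP_{i+1},P_{i-2}P_{i-1}\cap P_{i+1}P_{i+2})$ and $x_{2i+1}=\chi(P_{i+2},P_{i+1},P_{i+2}P_{i+1}\cap P_iP_{i-1},P_{i+2}P_{i+1}\cap P_{i-1}P_{i-2})$. *)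

theory Defs
  imports "HOL-Analysis.Analysis" "HOL-Analysis.Cross3" "HOL-Library.Extended_Real"
begin

text \<open>Points of RP^2 are represented by nonzero homogeneous coordinate vectors in real^3;
  all notions below are invariant under rescaling of the representatives.\<close>

definition det3 :: "real^3 \<Rightarrow> real^3 \<Rightarrow> real^3 \<Rightarrow> real" where
  "det3 A B C = A \<bullet> cross3 B C"

definition collinear_pt :: "real^3 \<Rightarrow> real^3 \<Rightarrow> real^3 \<Rightarrow> bool" where
  "collinear_pt A B C \<longleftrightarrow> det3 A B C = 0"

definition general_position4 :: "real^3 \<Rightarrow> real^3 \<Rightarrow> real^3 \<Rightarrow> real^3 \<Rightarrow> bool" where
  "general_position4 A B C D \<longleftrightarrow>
     \<not> collinear_pt A B C \<and> \<not> collinear_pt A B D \<and> \<not> collinear_pt A C D \<and> \<not> collinear_pt B C D"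

definition three_nice :: "(int \<Rightarrow> real^3) \<Rightarrow> bool" where
  "three_nice P \<longleftrightarrow> (\<forall>j. general_position4 (P j) (P (j+1)) (P (j+3)) (P (j+4)))"

definition meet :: "real^3 \<Rightarrow> real^3 \<Rightarrow> real^3 \<Rightarrow> real^3 \<Rightarrow> real^3" where
  "meet A B C D = cross3 (cross3 A B) (cross3 C D)"

text \<open>With n a normal vector of the common line, (X \<times> Y) \<bullet> n is (up to a common nonzero factor)
  the difference of the projective coordinates of X and Y on the line.\<close>
definition inv_cross_ratio :: "real^3 \<Rightarrow> real^3 \<Rightarrow> real^3 \<Rightarrow> real^3 \<Rightarrow> ereal" where
  "inv_cross_ratio A B C D =
     (let n = (SOME n. n \<noteq> 0 \<and> n \<bullet> A = 0 \<and> n \<bullet> B = 0 \<and> n \<bullet> C = 0 \<and> n \<bullet> D = 0);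
          d = (\<lambda>X Y. cross3 X Y \<bullet> n);
          num = d A B * d C D;
          den = d A C * d B D
      in if den = 0 then \<infinity> else ereal (num / den))"

definition corner_even :: "(int \<Rightarrow> real^3) \<Rightarrow> int \<Rightarrow> ereal" where
  "corner_even P i = inv_cross_ratio (P (i-2)) (P (i-1))
      (meet (P (i-2)) (P (i-1)) (P i) (P (i+1)))
      (meet (P (i-2)) (P (i-1)) (P (i+1)) (P (i+2)))"

definition corner_odd :: "(int \<Rightarrow> real^3) \<Rightarrow> int \<Rightarrow> ereal" where
  "corner_odd P i = inv_cross_ratio (P (i+2)) (P (i+1))
      (meet (P (i+2)) (P (i+1)) (P i) (P (i-1)))
      (meet (P (i+2)) (P (i+1)) (P (i-1)) (P (i-2)))"

definition in_A2 :: "real^3 \<Rightarrow> bool" where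
  "in_A2 X \<longleftrightarrow> X$3 \<noteq> 0"

definition aff :: "real^3 \<Rightarrow> real^2" where
  "aff X = vector [X$1 / X$3, X$2 / X$3]"

definition lift :: "real^2 \<Rightarrow> real^3" where
  "lift V = vector [V$1, V$2, 1]"

definition orient :: "real^2 \<Rightarrow> real^2 \<Rightarrow> real^2 \<Rightarrow> real" where
  "orient V1 V2 V3 = det3 (lift V1) (lift V2) (lift V3)"

definition positive_triple :: "real^2 \<Rightarrow> real^2 \<Rightarrow> real^2 \<Rightarrow> bool" where
  "positive_triple V1 V2 V3 \<longleftrightarrow> orient V1 V2 V3 > 0"

definition convex_quad :: "real^2 \<Rightarrow> real^2 \<Rightarrow> real^2 \<Rightarrow> real^2 \<Rightarrow> bool" where
  "convex_quad V1 V2 V3 V4 \<longleftrightarrow>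
     orient V1 V2 V3 * orient V1 V2 V4 > 0 \<and>
     orient V2 V3 V4 * orient V2 V3 V1 > 0 \<and>
     orient V3 V4 V1 * orient V3 V4 V2 > 0 \<and>
     orient V4 V1 V2 * orient V4 V1 V3 > 0"

definition tri_int :: "real^2 \<Rightarrow> real^2 \<Rightarrow> real^2 \<Rightarrow> (real^2) set" where
  "tri_int V1 V2 V3 = interior (convex hull {V1, V2, V3})"

end

theory Submission
  imports Defs
begin

text \<open>Normalise P(i-2), ..., P(i+1) to their affine lifts A, B, C, D and write
  [XYZ] for det3. By Cramer's rule P(i+2) is proportional to
  \<alpha> A + \<beta> B + \<delta> D with \<alpha> = [BDE], \<beta> = [DAE], \<delta> = [ABE].
  Expanding the meets, the two corner invariants become
  x_{2i} = 1 + [BCD]\<beta> / ([ACD]\<alpha>) and x_{2i+1} = 1 - [BCD]\<delta> / ([ABC]\<alpha> + [BCD]\<delta>),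
  the denominator of the latter coming from a Grassmann-Pluecker relation. Since all
  orientations of the convex quadrilateral ABCD are positive, x_{2i} > 1 and 0 < x_{2i+1} < 1
  force \<alpha>, \<beta>, \<delta> to have a common sign; so P(i+2) is affine with positive barycentric
  coordinates in the triangle ABD, and the new orientations are positive combinations of old ones.\<close>

lemma det3_expand:
  "det3 X Y Z = X$1*(Y$2*Z$3 - Y$3*Z$2) + X$2*(Y$3*Z$1 - Y$1*Z$3) + X$3*(Y$1*Z$2 - Y$2*Z$1)"
  unfolding det3_def by (simp add: cross3_simps)

lemma det3_scaleR:
  "det3 (a *\<^sub>R X) Y Z = a * det3 X Y Z"
  "det3 X (a *\<^sub>R Y) Z = a * det3 X Y Z"
  "det3 X Y (a *\<^sub>R Z) = a * det3 X Y Z"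
  by (simp_all add: det3_expand algebra_simps)

lemma det3_rotate: "det3 X Y Z = det3 Y Z X"
  by (simp add: det3_expand algebra_simps)

lemma det3_swap: "det3 X Y Z = - det3 Y X Z"
  by (simp add: det3_expand algebra_simps)

lemma det3_cramer:
  "det3 X Y Z *\<^sub>R W = det3 W Y Z *\<^sub>R X + det3 X W Z *\<^sub>R Y + det3 X Y W *\<^sub>R Z"
  by (simp add: vec_eq_iff forall_3 det3_expand) algebra

lemma det3_plucker:
  "det3 X Y Z * det3 Y W E = det3 Y Z E * det3 X Y W + det3 X Y E * det3 Y W Z"
  by (simp add: det3_expand) algebra

lemma meet_eq_combination: "meet A B C D = det3 A C D *\<^sub>R B - det3 B C D *\<^sub>R A"
  by (simp add: meet_def vec_eq_iff forall_3 det3_expand cross_components) algebra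

lemma inv_cross_ratio_combination:
  assumes C: "C = c1 *\<^sub>R A + c2 *\<^sub>R B" and D: "D = d1 *\<^sub>R A + d2 *\<^sub>R B"
    and finite: "inv_cross_ratio A B C D \<noteq> \<infinity>"
  shows "inv_cross_ratio A B C D = ereal (1 - c1*d2 / (c2*d1))"
proof -
  define n where "n = (SOME n. n \<noteq> 0 \<and> n \<bullet> A = 0 \<and> n \<bullet> B = 0 \<and> n \<bullet> C = 0 \<and> n \<bullet> D = 0)"
  \<comment> \<open>every cross product of two points of the line AB is a multiple of cross3 A B,
    so the chosen normal n only contributes the common factor k\<close>
  define k where "k = cross3 A B \<bullet> n"
  have BA: "cross3 B A \<bullet> n = - k"
    unfolding k_def by (metis cross_skew inner_minus_left)
  have AC: "cross3 A C \<bullet> n = c2 * k"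
    unfolding C k_def by (simp add: cross_add_right cross_mult_right inner_add_left)
  have BD: "cross3 B D \<bullet> n = - d1 * k"
    unfolding D using BA by (simp add: cross_add_right cross_mult_right inner_add_left)
  have CD: "cross3 C D \<bullet> n = (c1*d2 - c2*d1) * k"
    unfolding C D using BA
    by (simp add: cross_add_left cross_add_right cross_mult_left cross_mult_right
        k_def algebra_simps)
  have expanded: "inv_cross_ratio A B C D =
      (if c2*k*(-d1*k) = 0 then \<infinity> else ereal (k * ((c1*d2 - c2*d1) * k) / (c2*k*(-d1*k))))"
    unfolding inv_cross_ratio_def Let_def n_def[symmetric] AC BD CD k_def[symmetric] by simp
  with finite have "c2 \<noteq> 0" "d1 \<noteq> 0" "k \<noteq> 0"
    by (auto split: if_splits)
  with expanded show ?thesis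
    by (simp add: field_simps)
qed

definition corner_ratio :: "real^3 \<Rightarrow> real^3 \<Rightarrow> real^3 \<Rightarrow> real^3 \<Rightarrow> real^3 \<Rightarrow> real" where
  "corner_ratio A B C D E = det3 B C D * det3 A D E / (det3 A C D * det3 B D E)"

lemma inv_cross_ratio_meet:
  assumes "inv_cross_ratio A B (meet A B C D) (meet A B D E) \<noteq> \<infinity>"
  shows "inv_cross_ratio A B (meet A B C D) (meet A B D E) = ereal (1 - corner_ratio A B C D E)"
proof -
  have "meet A B C D = (- det3 B C D) *\<^sub>R A + det3 A C D *\<^sub>R B"
       "meet A B D E = (- det3 B D E) *\<^sub>R A + det3 A D E *\<^sub>R B"
    by (simp_all add: meet_eq_combination)
  from inv_cross_ratio_combination[OF this assms] show ?thesis
    by (simp add: corner_ratio_def)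
qed

lemma corner_ratio_scaleR:
  assumes "a \<noteq> 0" "b \<noteq> 0" "c \<noteq> 0" "d \<noteq> 0" "e \<noteq> 0"
  shows "corner_ratio (a *\<^sub>R A) (b *\<^sub>R B) (c *\<^sub>R C) (d *\<^sub>R D) (e *\<^sub>R E) = corner_ratio A B C D E"
  using assms by (simp add: corner_ratio_def det3_scaleR)

lemma lift_components [simp]: "lift V $ 1 = V$1" "lift V $ 2 = V$2" "lift V $ 3 = 1"
  by (simp_all add: lift_def vector_def)

lemma lift_aff: "in_A2 X \<Longrightarrow> X = X$3 *\<^sub>R lift (aff X)"
  by (simp add: in_A2_def lift_def aff_def vec_eq_iff forall_3 vector_def)

lemma orient_expand: "orient U V W = (V$1 - U$1) * (W$2 - U$2) - (V$2 - U$2) * (W$1 - U$1)"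
  by (simp add: orient_def det3_expand algebra_simps)

lemma orient_rotate: "orient U V W = orient V W U"
  by (simp add: orient_expand algebra_simps)

lemma orient_affine_combination:
  assumes "x + y + z = 1"
  shows "orient U V (x *\<^sub>R X + y *\<^sub>R Y + z *\<^sub>R Z) = x * orient U V X + y * orient U V Y + z * orient U V Z"
proof -
  from assms have z: "z = 1 - x - y" by simp
  show ?thesis by (simp add: orient_expand z algebra_simps)
qed

lemma collinear_imp_orient_eq_0:
  assumes "collinear {U, V, W}"
  shows "orient U V W = 0"
proof -
  from assms consider "U = W" | u where "V = u *\<^sub>R U + (1 - u) *\<^sub>R W"
    by (auto simp: collinear_3_expand)
  then show ?thesis
  proof cases
    case 1
    then show ?thesis by (simp add: orient_expand)
  next
    case 2
    then show ?thesis by (simp add: orient_expand) (simp add: algebra_simps)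
  qed
qed

lemma barycentric_in_tri_int:
  assumes "orient U V W \<noteq> 0" "0 < x" "0 < y" "0 < z" "x + y + z = 1"
  shows "x *\<^sub>R U + y *\<^sub>R V + z *\<^sub>R W \<in> tri_int U V W"
proof -
  have "\<not> collinear {U, V, W}"
    using assms(1) collinear_imp_orient_eq_0 by blast
  then have "tri_int U V W = {v. \<exists>x y z. 0 < x \<and> 0 < y \<and> 0 < z \<and> x + y + z = 1 \<and>
      x *\<^sub>R U + y *\<^sub>R V + z *\<^sub>R W = v}"
    unfolding tri_int_def by (rule interior_convex_hull_3_minimal) simp
  with assms(2-5) show ?thesis by blast
qed

lemma aff_of_lift_combination:
  assumes "c *\<^sub>R X = x *\<^sub>R lift U + y *\<^sub>R lift V + z *\<^sub>R lift W" "c \<noteq> 0" "x + y + z \<noteq> 0"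
  shows "in_A2 X"
    and "aff X = (x / (x+y+z)) *\<^sub>R U + (y / (x+y+z)) *\<^sub>R V + (z / (x+y+z)) *\<^sub>R W"
proof -
  have comp: "c * X$j = x * lift U $ j + y * lift V $ j + z * lift W $ j" for j
    using arg_cong[OF assms(1), of "\<lambda>v. v$j"] by simp
  from comp[of 3] assms(2) have X3: "X$3 = (x+y+z) / c"
    by (simp add: field_simps)
  with assms(2,3) show "in_A2 X"
    by (simp add: in_A2_def)
  have "aff X $ 1 = c * X$1 / (x+y+z)" "aff X $ 2 = c * X$2 / (x+y+z)"
    using assms(2) by (simp_all add: aff_def vector_def X3)
  then show "aff X = (x / (x+y+z)) *\<^sub>R U + (y / (x+y+z)) *\<^sub>R V + (z / (x+y+z)) *\<^sub>R W"
    by (simp add: vec_eq_iff forall_2 comp add_divide_distrib)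
qed

lemma pos_mult_if_quotient_in_unit_interval:
  fixes u w :: real
  assumes "0 < u / (w + u)" "u / (w + u) < 1"
  shows "0 < u * w"
proof (cases "0 < w + u")
  case True
  with assms show ?thesis by (simp add: zero_less_divide_iff divide_less_eq zero_less_mult_iff)
next
  case False
  with assms have "w + u < 0" by (cases "w + u = 0") auto
  with assms show ?thesis by (simp add: zero_less_divide_iff divide_less_eq zero_less_mult_iff)
qed

lemma corner_bounds_imp_same_sign:
  fixes A B C D :: "real^2" and E :: "real^3"
  defines "\<alpha> \<equiv> det3 (lift B) (lift D) E" and "\<beta> \<equiv> det3 (lift D) (lift A) E"
    and "\<delta> \<equiv> det3 (lift A) (lift B) E"
  assumes pos: "0 < orient A B C" "0 < orient B C D" "0 < orient A C D"
    and even: "corner_ratio (lift A) (lift B) (lift C) (lift D) E < 0"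
    and odd: "0 < corner_ratio E (lift D) (lift C) (lift B) (lift A)"
      "corner_ratio E (lift D) (lift C) (lift B) (lift A) < 1"
  shows "0 < \<alpha> * \<beta>" and "0 < \<alpha> * \<delta>"
proof -
  have "corner_ratio (lift A) (lift B) (lift C) (lift D) E = - (orient B C D * \<beta> / (orient A C D * \<alpha>))"
    by (simp add: corner_ratio_def orient_def \<alpha>_def \<beta>_def det3_swap[of "lift A" "lift D" E])
  with even pos show "0 < \<alpha> * \<beta>"
    by (auto simp: zero_less_divide_iff zero_less_mult_iff mult_less_0_iff)
  have "det3 (lift B) (lift C) E * orient A B D = orient A B C * \<alpha> + orient B C D * \<delta>"
    using det3_plucker[of "lift A" "lift B" "lift C" "lift D" E]
      det3_swap[of "lift D" "lift B" "lift C"] det3_rotate[of "lift D" "lift B" "lift C"]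
    by (simp add: orient_def \<alpha>_def \<delta>_def)
  then have "corner_ratio E (lift D) (lift C) (lift B) (lift A) =
      orient B C D * \<delta> / (orient A B C * \<alpha> + orient B C D * \<delta>)"
    by (simp add: corner_ratio_def orient_def \<delta>_def det3_expand algebra_simps)
  with odd have "0 < orient B C D * \<delta> * (orient A B C * \<alpha>)"
    by (intro pos_mult_if_quotient_in_unit_interval) simp_all
  with pos show "0 < \<alpha> * \<delta>"
    by (auto simp: zero_less_mult_iff mult_less_0_iff)
qed

lemma convex_quad_step_if_same_sign:
  fixes A B C D :: "real^2" and E :: "real^3"
  defines "\<alpha> \<equiv> det3 (lift B) (lift D) E" and "\<beta> \<equiv> det3 (lift D) (lift A) E"
    and "\<delta> \<equiv> det3 (lift A) (lift B) E"
  assumes pos: "0 < orient A B C" "0 < orient B C D" "0 < orient A B D" "0 < orient A C D"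
    and same_sign: "0 < \<alpha> * \<beta>" "0 < \<alpha> * \<delta>"
  shows "in_A2 E \<and> aff E \<in> tri_int A B D \<and> convex_quad B C D (aff E) \<and>
    positive_triple C D (aff E) \<and> positive_triple B C (aff E)"
proof -
  define k where "k = \<alpha> + \<beta> + \<delta>"
  from same_sign have bary_pos: "0 < \<alpha> / k" "0 < \<beta> / k" "0 < \<delta> / k"
    by (auto simp: k_def zero_less_mult_iff zero_less_divide_iff)
  then have "k \<noteq> 0" by auto
  have "orient A B D *\<^sub>R E = \<alpha> *\<^sub>R lift A + \<beta> *\<^sub>R lift B + \<delta> *\<^sub>R lift D"
    using det3_cramer[of "lift A" "lift B" "lift D" E]
    by (simp add: orient_def \<alpha>_def \<beta>_def \<delta>_def det3_rotate[of E] det3_rotate[of _ E])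
  from aff_of_lift_combination[OF this] pos(3) \<open>k \<noteq> 0\<close>
  have "in_A2 E" and E': "aff E = (\<alpha>/k) *\<^sub>R A + (\<beta>/k) *\<^sub>R B + (\<delta>/k) *\<^sub>R D"
    by (simp_all add: k_def)
  have bary_sum: "\<alpha>/k + \<beta>/k + \<delta>/k = 1"
    using \<open>k \<noteq> 0\<close> by (simp add: k_def add_divide_distrib[symmetric])
  have "aff E \<in> tri_int A B D"
    unfolding E' using pos(3) bary_pos bary_sum by (intro barycentric_in_tri_int) simp_all
  have orient_E: "orient B C (aff E) = \<alpha>/k * orient A B C + \<delta>/k * orient B C D"
    "orient C D (aff E) = \<alpha>/k * orient A C D + \<beta>/k * orient B C D"
    "orient B D (aff E) = \<alpha>/k * orient A B D"
    unfolding E' orient_affine_combination[OF bary_sum]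
    by (simp_all add: orient_expand algebra_simps)
  have "0 < orient B C (aff E)" "0 < orient C D (aff E)" "0 < orient B D (aff E)"
    unfolding orient_E by (intro add_pos_pos mult_pos_pos bary_pos pos)+
  moreover have "orient C D B = orient B C D" "orient D (aff E) B = orient B D (aff E)"
    "orient D (aff E) C = orient C D (aff E)" "orient (aff E) B C = orient B C (aff E)"
    "orient (aff E) B D = orient B D (aff E)"
    by (simp_all add: orient_rotate[symmetric])
  ultimately show ?thesis
    using pos \<open>in_A2 E\<close> \<open>aff E \<in> tri_int A B D\<close>
    by (simp add: convex_quad_def positive_triple_def)
qed

lemma convex_quad_orient_pos:
  assumes "convex_quad A B C D" "0 < orient A B C" "0 < orient B C D"
  shows "0 < orient A B D" and "0 < orient A C D"
proof -
  from assms have "0 < orient A B C * orient A B D" "0 < orient C D A * orient C D B"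
    by (simp_all add: convex_quad_def)
  moreover have "orient C D A = orient A C D" "orient C D B = orient B C D"
    by (simp_all add: orient_rotate[symmetric])
  ultimately show "0 < orient A B D" "0 < orient A C D"
    using assms(2,3) by (simp_all add: zero_less_mult_iff)
qed

lemma corner_even_eq:
  "corner_even P i \<noteq> \<infinity> \<Longrightarrow>
    corner_even P i = ereal (1 - corner_ratio (P (i-2)) (P (i-1)) (P i) (P (i+1)) (P (i+2)))"
  unfolding corner_even_def by (rule inv_cross_ratio_meet)

lemma corner_odd_eq:
  "corner_odd P i \<noteq> \<infinity> \<Longrightarrow>
    corner_odd P i = ereal (1 - corner_ratio (P (i+2)) (P (i+1)) (P i) (P (i-1)) (P (i-2)))"
  unfolding corner_odd_def by (rule inv_cross_ratio_meet)

theorem mainTheorem14: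
  fixes P :: "int \<Rightarrow> real^3" and i :: int
  assumes nonzero: "\<And>j. P j \<noteq> 0"
    and nice: "three_nice P"
    and consec: "\<And>j. \<not> collinear_pt (P j) (P (j+1)) (P (j+2))"
    and aff_pts: "in_A2 (P (i-2))" "in_A2 (P (i-1))" "in_A2 (P i)" "in_A2 (P (i+1))"
    and pos1: "positive_triple (aff (P (i-2))) (aff (P (i-1))) (aff (P i))"
    and pos2: "positive_triple (aff (P (i-1))) (aff (P i)) (aff (P (i+1)))"
    and cvx: "convex_quad (aff (P (i-2))) (aff (P (i-1))) (aff (P i)) (aff (P (i+1)))"
    and x_even: "1 < corner_even P i" "corner_even P i < \<infinity>"
    and x_odd: "0 < corner_odd P i" "corner_odd P i < 1"
  shows "in_A2 (P (i+2)) \<and>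
         aff (P (i+2)) \<in> tri_int (aff (P (i-2))) (aff (P (i-1))) (aff (P (i+1))) \<and>
         convex_quad (aff (P (i-1))) (aff (P i)) (aff (P (i+1))) (aff (P (i+2))) \<and>
         positive_triple (aff (P i)) (aff (P (i+1))) (aff (P (i+2))) \<and>
         positive_triple (aff (P (i-1))) (aff (P i)) (aff (P (i+2)))"
proof -
  let ?A = "aff (P (i-2))" and ?B = "aff (P (i-1))" and ?C = "aff (P i)" and ?D = "aff (P (i+1))"
  have scales: "P (i-2)$3 \<noteq> 0" "P (i-1)$3 \<noteq> 0" "P i$3 \<noteq> 0" "P (i+1)$3 \<noteq> 0"
    using aff_pts by (simp_all add: in_A2_def)
  have lifts: "P (i-2) = P (i-2)$3 *\<^sub>R lift ?A" "P (i-1) = P (i-1)$3 *\<^sub>R lift ?B"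
    "P i = P i$3 *\<^sub>R lift ?C" "P (i+1) = P (i+1)$3 *\<^sub>R lift ?D"
    using aff_pts by (simp_all add: lift_aff)
  have "corner_even P i = ereal (1 - corner_ratio (lift ?A) (lift ?B) (lift ?C) (lift ?D) (P (i+2)))"
    using corner_even_eq[of P i] x_even(2)
      corner_ratio_scaleR[OF scales one_neq_zero, of "lift ?A" "lift ?B" "lift ?C" "lift ?D" "P (i+2)"]
    by (simp add: lifts[symmetric])
  with x_even(1) have even: "corner_ratio (lift ?A) (lift ?B) (lift ?C) (lift ?D) (P (i+2)) < 0"
    by simp
  from x_odd(2) have "corner_odd P i \<noteq> \<infinity>" by auto
  then have "corner_odd P i = ereal (1 - corner_ratio (P (i+2)) (lift ?D) (lift ?C) (lift ?B) (lift ?A))"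
    using corner_odd_eq[of P i]
      corner_ratio_scaleR[OF one_neq_zero scales(4,3,2,1),
        of "P (i+2)" "lift ?D" "lift ?C" "lift ?B" "lift ?A"]
    by (simp add: lifts[symmetric])
  with x_odd have odd: "0 < corner_ratio (P (i+2)) (lift ?D) (lift ?C) (lift ?B) (lift ?A)"
      "corner_ratio (P (i+2)) (lift ?D) (lift ?C) (lift ?B) (lift ?A) < 1"
    by simp_all
  have orients: "0 < orient ?A ?B ?C" "0 < orient ?B ?C ?D" "0 < orient ?A ?B ?D" "0 < orient ?A ?C ?D"
    using pos1 pos2 convex_quad_orient_pos[OF cvx] by (simp_all add: positive_triple_def)
  from convex_quad_step_if_same_sign[OF orients corner_bounds_imp_same_sign[OF orients(1,2,4) even odd]]
  show ?thesis .
qed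

end
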